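(* Let $L_1,\dots,L_m$ be signed Laplacians of signed digraphs on $\{1,\dots,n\}$, each weight balanced with $-L_k$ EEP, and let $Q\in\mathbb{R}^{(n-1)\times n}$ satisfy $QQ^\top=I_{n-1}$, $Q\mathbf{1}=0$. Fix an integer $r\ge1$ and set $\hat L_k=L_k\oplus\cdots\oplus L_k$ ($r$-fold Kronecker sum) and $\hat Q=Q\otimes\cdots\otimes Q$ ($r$-fold Kronecker product). If there exists a symmetric positive definite $\hat P\in\mathbb{R}^{n^r\times n^r}$ such that \[ -\hat Q\hat L_k\hat P\hat Q^\top-\hat Q\hat P\hat L_k^\top\hat Q^\top\prec0\quad\text{for all }k=1,\dots,m, \] then $\{L_1,\dots,L_m\}$ is a consensus set for the switched system $\dot{\mathbf{x}}=-L_{\sigma(t)}\mathbf{x}$.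
   Context: For a signed digraph with real weighted adjacency matrix $A$ (entries of any sign), the signed Laplacian is $L=\Sigma-A$, $\Sigma=\mathrm{diag}(\sigma_i)$, $\sigma_i=\sum_jA_{ij}$, so $L\mathbf{1}=0$; weight balanced means $L^\top\mathbf{1}=0$. $M$ is EEP if there is $t_0\ge0$ with $e^{Mt}$ entrywise positive for all real $t\ge t_0$. The Kronecker sum is $A\oplus B=A\otimes I+I\otimes B$, and the $r$-fold version is defined iteratively. $X\prec0$ means symmetric negative definite. A switching signal is a piecewise constant map $\sigma:[0,\infty)\to\{1,\dots,m\}$ with finitely many discontinuities on every bounded interval; a consensus set is one for which, for every switching signal and every $\mathbf{x}(0)$, $\mathbf{x}(t)\to\alpha\mathbf{1}$ for some $\alpha\in\mathbb{R}$. *)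

theory Defs
  imports Complex_Main "Jordan_Normal_Form.Matrix"
begin

definition ones_vec :: "nat \<Rightarrow> real vec" where
  "ones_vec n = vec n (\<lambda>_. 1)"

definition signed_laplacian :: "real mat \<Rightarrow> real mat" where
  "signed_laplacian A = mat (dim_row A) (dim_col A)
     (\<lambda>(i,j). (if i = j then (\<Sum>l<dim_col A. A $$ (i,l)) else 0) - A $$ (i,j))"

definition is_signed_laplacian :: "nat \<Rightarrow> real mat \<Rightarrow> bool" where
  "is_signed_laplacian n L \<longleftrightarrow> (\<exists>A \<in> carrier_mat n n. L = signed_laplacian A)"

definition weight_balanced :: "nat \<Rightarrow> real mat \<Rightarrow> bool" where
  "weight_balanced n L \<longleftrightarrow> transpose_mat L *\<^sub>v ones_vec n = 0\<^sub>v n"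

definition mat_exp :: "real mat \<Rightarrow> real \<Rightarrow> real mat" where
  "mat_exp M t = mat (dim_row M) (dim_col M)
     (\<lambda>(i,j). (\<Sum>k. (t ^ k / fact k) * (M ^\<^sub>m k) $$ (i,j)))"

definition EEP :: "real mat \<Rightarrow> bool" where
  "EEP M \<longleftrightarrow> (\<exists>t0\<ge>0. \<forall>t\<ge>t0. \<forall>i<dim_row M. \<forall>j<dim_col M. mat_exp M t $$ (i,j) > 0)"

definition kron :: "real mat \<Rightarrow> real mat \<Rightarrow> real mat" where
  "kron A B = mat (dim_row A * dim_row B) (dim_col A * dim_col B)
     (\<lambda>(i,j). A $$ (i div dim_row B, j div dim_col B) * B $$ (i mod dim_row B, j mod dim_col B))"

definition kron_sum :: "real mat \<Rightarrow> real mat \<Rightarrow> real mat" where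
  "kron_sum A B = kron A (1\<^sub>m (dim_row B)) + kron (1\<^sub>m (dim_row A)) B"

fun kron_pow :: "real mat \<Rightarrow> nat \<Rightarrow> real mat" where
  "kron_pow Q 0 = 1\<^sub>m 1"
| "kron_pow Q (Suc r) = kron (kron_pow Q r) Q"

fun kron_sum_pow :: "real mat \<Rightarrow> nat \<Rightarrow> real mat" where
  "kron_sum_pow L 0 = 0\<^sub>m 1 1"
| "kron_sum_pow L (Suc r) = kron_sum (kron_sum_pow L r) L"

definition symmetric_mat :: "real mat \<Rightarrow> bool" where
  "symmetric_mat X \<longleftrightarrow> transpose_mat X = X"

definition pos_def :: "nat \<Rightarrow> real mat \<Rightarrow> bool" where
  "pos_def N X \<longleftrightarrow> X \<in> carrier_mat N N \<and> symmetric_mat X \<and>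
     (\<forall>v \<in> carrier_vec N. v \<noteq> 0\<^sub>v N \<longrightarrow> v \<bullet> (X *\<^sub>v v) > 0)"

definition neg_def :: "nat \<Rightarrow> real mat \<Rightarrow> bool" where
  "neg_def N X \<longleftrightarrow> X \<in> carrier_mat N N \<and> symmetric_mat X \<and>
     (\<forall>v \<in> carrier_vec N. v \<noteq> 0\<^sub>v N \<longrightarrow> v \<bullet> (X *\<^sub>v v) < 0)"

(* a switching signal with values in {0..<m} (the m modes), piecewise constant on [0,\<infinity>)
   with finitely many discontinuities on every bounded interval *)
definition switching_signal :: "nat \<Rightarrow> (real \<Rightarrow> nat) \<Rightarrow> bool" where
  "switching_signal m \<sigma> \<longleftrightarrow> (\<forall>t\<ge>0. \<sigma> t < m) \<and>
     (\<exists>D. (\<forall>T. finite (D \<inter> {0..T})) \<and>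
          (\<forall>t\<ge>0. t \<notin> D \<longrightarrow> (\<exists>e>0. \<forall>s\<ge>0. \<bar>s - t\<bar> < e \<longrightarrow> \<sigma> s = \<sigma> t)))"

(* x is a solution on [0,\<infinity>) of  x' = - L_{\<sigma>(t)} x : continuous, and satisfying the ODE
   at all times except a set of switching instants that is finite on bounded intervals *)
definition switched_solution ::
    "nat \<Rightarrow> real mat list \<Rightarrow> (real \<Rightarrow> nat) \<Rightarrow> (real \<Rightarrow> real vec) \<Rightarrow> bool" where
  "switched_solution n Ls \<sigma> x \<longleftrightarrow>
     (\<forall>t\<ge>0. x t \<in> carrier_vec n) \<and>
     (\<forall>i<n. continuous_on {0..} (\<lambda>t. x t $ i)) \<and>
     (\<exists>D. (\<forall>T. finite (D \<inter> {0..T})) \<and>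
        (\<forall>t\<ge>0. t \<notin> D \<longrightarrow> (\<forall>i<n.
           ((\<lambda>s. x s $ i) has_real_derivative ((- (Ls ! \<sigma> t)) *\<^sub>v x t) $ i) (at t within {0..}))))"

definition consensus_set :: "nat \<Rightarrow> real mat list \<Rightarrow> bool" where
  "consensus_set n Ls \<longleftrightarrow>
     (\<forall>\<sigma> x. switching_signal (length Ls) \<sigma> \<longrightarrow> switched_solution n Ls \<sigma> x \<longrightarrow>
        (\<exists>\<alpha>::real. \<forall>i<n. ((\<lambda>t. x t $ i) \<longlongrightarrow> \<alpha>) at_top))"

end

theory Submission
  imports Defs "HOL-Analysis.Analysis" "Jordan_Normal_Form.Determinant" "HOL-Real_Asymp.Real_Asymp"
begin

text \<open>Since \<open>L\<^sub>k \<one> = 0\<close> and the rows of \<open>Q\<close> are an orthonormal basis of \<open>\<one>\<^sup>\<bottom>\<close>, we have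
  \<open>Q\<^sup>T Q = I - \<one>\<one>\<^sup>T/n\<close> and hence \<open>Q L\<^sub>k = R\<^sub>k Q\<close> with \<open>R\<^sub>k = Q L\<^sub>k Q\<^sup>T\<close>: the disagreement
  \<open>u = Q x\<close> solves \<open>u' = -R\<^sub>\<sigma> u\<close>. Its tensor power \<open>z = u\<^sup>\<otimes>\<^sup>r\<close> solves \<open>z' = -R\<^sub>\<sigma>\<^sup>\<oplus>\<^sup>r z\<close>, and by the
  mixed-product rule the LMI says exactly that \<open>R\<^sub>k\<^sup>\<oplus>\<^sup>r P' + P' (R\<^sub>k\<^sup>\<oplus>\<^sup>r)\<^sup>T \<succ> 0\<close> for the positive
  definite \<open>P' = Q\<^sup>\<otimes>\<^sup>r P (Q\<^sup>\<otimes>\<^sup>r)\<^sup>T\<close>. So \<open>z\<^sup>T P'\<^sup>-\<^sup>1 z\<close> is a common Lyapunov function for all modes, which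
  decays exponentially; thus \<open>z \<rightarrow> 0\<close>, and \<open>u \<rightarrow> 0\<close> because each \<open>u\<^sub>j\<^sup>r\<close> is an entry of \<open>z\<close>. Weight balance
  keeps \<open>\<one>\<^sup>T x\<close> constant, and \<open>x = Q\<^sup>T u + (\<one>\<^sup>T x / n) \<one>\<close> converges to the average.\<close>

unbundle no vec_syntax
unbundle no inner_syntax

section \<open>Kronecker products and sums\<close>

lemma div_mod_less_of_less_mult: "i < a * (b::nat) \<Longrightarrow> i div b < a \<and> i mod b < b"
  by (metis less_mult_imp_div_less mod_less_divisor mult_0_right not_less0 neq0_conv)

lemma add_mult_less_mult: "a < (c::nat) \<Longrightarrow> b < d \<Longrightarrow> b + a * d < c * d"
proof -
  assume "a < c" "b < d"
  then have "b + a * d < Suc a * d" by simp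
  also have "\<dots> \<le> c * d" using \<open>a < c\<close> by (intro mult_le_mono1) simp
  finally show ?thesis .
qed

lemma div_mod_add_mult: "b < (q::nat) \<Longrightarrow> (b + a * q) div q = a \<and> (b + a * q) mod q = b"
  by auto

lemma dim_kron [simp]:
  "dim_row (kron A B) = dim_row A * dim_row B" "dim_col (kron A B) = dim_col A * dim_col B"
  unfolding kron_def by auto

lemma index_kron:
  "i < dim_row A * dim_row B \<Longrightarrow> j < dim_col A * dim_col B \<Longrightarrow>
   kron A B $$ (i,j) = A $$ (i div dim_row B, j div dim_col B) * B $$ (i mod dim_row B, j mod dim_col B)"
  unfolding kron_def by auto

lemma kron_mult:
  assumes A: "A \<in> carrier_mat r1 c1" and B: "B \<in> carrier_mat r2 c2"
    and C: "C \<in> carrier_mat c1 k1" and D: "D \<in> carrier_mat c2 k2"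
  shows "kron A B * kron C D = kron (A * C) (B * D)"
proof (rule eq_matI)
  fix i j assume "i < dim_row (kron (A * C) (B * D))" "j < dim_col (kron (A * C) (B * D))"
  then have i: "i < r1 * r2" and j: "j < k1 * k2" using A B C D by auto
  note ij = div_mod_less_of_less_mult[OF i] div_mod_less_of_less_mult[OF j]
  have "(kron A B * kron C D) $$ (i,j) = (\<Sum>k<c1*c2. kron A B $$ (i,k) * kron C D $$ (k,j))"
    using A B C D i j by (simp add: scalar_prod_def index_mult_mat atLeast0LessThan kron_def)
  also have "\<dots> = (\<Sum>a<c1. \<Sum>b<c2. kron A B $$ (i,b + a*c2) * kron C D $$ (b + a*c2,j))"
    by (rule sum_mult_product)
  also have "\<dots> = (\<Sum>a<c1. \<Sum>b<c2. (A $$ (i div r2, a) * C $$ (a, j div k2)) *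
                                     (B $$ (i mod r2, b) * D $$ (b, j mod k2)))"
  proof (intro sum.cong refl)
    fix a b assume "a \<in> {..<c1}" "b \<in> {..<c2}"
    then show "kron A B $$ (i,b + a*c2) * kron C D $$ (b + a*c2,j) =
               (A $$ (i div r2, a) * C $$ (a, j div k2)) * (B $$ (i mod r2, b) * D $$ (b, j mod k2))"
      using A B C D i j add_mult_less_mult[of a c1 b c2] div_mod_add_mult[of b c2 a]
      by (simp add: index_kron)
  qed
  also have "\<dots> = (\<Sum>a<c1. A $$ (i div r2, a) * C $$ (a, j div k2)) *
                  (\<Sum>b<c2. B $$ (i mod r2, b) * D $$ (b, j mod k2))"
    by (simp add: sum_product)
  also have "\<dots> = kron (A * C) (B * D) $$ (i,j)"
    using A B C D i j ij by (simp add: index_kron scalar_prod_def atLeast0LessThan)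
  finally show "(kron A B * kron C D) $$ (i,j) = kron (A * C) (B * D) $$ (i,j)" .
qed (use A B C D in auto)

lemma kron_one: "kron (1\<^sub>m a) (1\<^sub>m b) = 1\<^sub>m (a * b)"
proof (rule eq_matI)
  fix i j assume "i < dim_row (1\<^sub>m (a * b))" "j < dim_col (1\<^sub>m (a * b))"
  then have i: "i < a * b" and j: "j < a * b" by auto
  then have b: "0 < b" by (auto intro: ccontr)
  have "(i div b = j div b \<and> i mod b = j mod b) = (i = j)"
    by (metis div_mult_mod_eq)
  then show "kron (1\<^sub>m a) (1\<^sub>m b) $$ (i, j) = 1\<^sub>m (a * b) $$ (i, j)"
    using i j b by (auto simp: index_kron less_mult_imp_div_less)
qed auto

lemma transpose_kron: "transpose_mat (kron A B) = kron (transpose_mat A) (transpose_mat B)"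
  by (intro eq_matI) (auto simp: index_kron div_mod_less_of_less_mult)

lemma kron_sum_carrier:
  "A \<in> carrier_mat a a \<Longrightarrow> B \<in> carrier_mat b b \<Longrightarrow> kron_sum A B \<in> carrier_mat (a * b) (a * b)"
  unfolding kron_sum_def by auto

lemma kron_pow_carrier: "Q \<in> carrier_mat p n \<Longrightarrow> kron_pow Q r \<in> carrier_mat (p ^ r) (n ^ r)"
  by (induction r) (auto simp: carrier_matD mult.commute)

lemma kron_sum_pow_carrier: "L \<in> carrier_mat n n \<Longrightarrow> kron_sum_pow L r \<in> carrier_mat (n ^ r) (n ^ r)"
proof (induction r)
  case (Suc r)
  then show ?case using kron_sum_carrier[OF Suc.IH Suc.prems] by (simp add: mult.commute)
qed auto

lemma kron_mult_kron_sum: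
  assumes K: "K \<in> carrier_mat p' n'" and S: "S \<in> carrier_mat n' n'" and M: "M \<in> carrier_mat p' p'"
    and Q: "Q \<in> carrier_mat p n" and L: "L \<in> carrier_mat n n" and R: "R \<in> carrier_mat p p"
    and KS: "K * S = M * K" and QL: "Q * L = R * Q"
  shows "kron K Q * kron_sum S L = kron_sum M R * kron K Q"
proof -
  have "kron K Q * kron_sum S L = kron K Q * kron S (1\<^sub>m n) + kron K Q * kron (1\<^sub>m n') L"
    unfolding kron_sum_def using K S Q L
    by (subst mult_add_distrib_mat[of _ "p' * p" "n' * n"]) (auto simp: carrier_matD)
  also have "\<dots> = kron (K * S) (Q * 1\<^sub>m n) + kron (K * 1\<^sub>m n') (Q * L)"
    using K S Q L by (simp add: kron_mult[of _ p' n' _ p n _ n' _ n])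
  also have "\<dots> = kron (M * K) Q + kron K (R * Q)" using K Q KS QL by simp
  also have "\<dots> = kron M (1\<^sub>m p) * kron K Q + kron (1\<^sub>m p') R * kron K Q"
    using K M Q R by (simp add: kron_mult[of _ p' p' _ p p _ n' _ n])
  also have "\<dots> = kron_sum M R * kron K Q"
    unfolding kron_sum_def using K M Q R
    by (subst add_mult_distrib_mat[of _ "p' * p" "p' * p"]) (auto simp: carrier_matD)
  finally show ?thesis .
qed

lemma kron_pow_mult_kron_sum_pow:
  assumes Q: "Q \<in> carrier_mat p n" and L: "L \<in> carrier_mat n n" and R: "R \<in> carrier_mat p p"
    and QL: "Q * L = R * Q"
  shows "kron_pow Q r * kron_sum_pow L r = kron_sum_pow R r * kron_pow Q r"
proof (induction r)
  case (Suc r)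
  show ?case
    using kron_mult_kron_sum[OF kron_pow_carrier[OF Q] kron_sum_pow_carrier[OF L]
        kron_sum_pow_carrier[OF R] Q L R Suc.IH QL]
    by simp
qed simp

lemma kron_pow_mult_transpose:
  assumes Q: "Q \<in> carrier_mat p n" and QQ: "Q * transpose_mat Q = 1\<^sub>m p"
  shows "kron_pow Q r * transpose_mat (kron_pow Q r) = 1\<^sub>m (p ^ r)"
proof (induction r)
  case (Suc r)
  have "kron_pow Q (Suc r) * transpose_mat (kron_pow Q (Suc r)) =
        kron (kron_pow Q r * transpose_mat (kron_pow Q r)) (Q * transpose_mat Q)"
    using kron_pow_carrier[OF Q] Q
    by (simp add: transpose_kron kron_mult[of _ "p ^ r" "n ^ r" _ p n _ "p ^ r" _ p])
  then show ?case using Suc.IH QQ by (simp add: kron_one mult.commute)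
qed simp

definition vec_kron :: "real Matrix.vec \<Rightarrow> real Matrix.vec \<Rightarrow> real Matrix.vec" where
  "vec_kron a b = Matrix.vec (dim_vec a * dim_vec b) (\<lambda>i. a $ (i div dim_vec b) * b $ (i mod dim_vec b))"

lemma dim_vec_kron [simp]: "dim_vec (vec_kron a b) = dim_vec a * dim_vec b"
  unfolding vec_kron_def by simp

lemma index_vec_kron:
  "i < dim_vec a * dim_vec b \<Longrightarrow> vec_kron a b $ i = a $ (i div dim_vec b) * b $ (i mod dim_vec b)"
  unfolding vec_kron_def by simp

lemma vec_kron_carrier:
  "a \<in> carrier_vec na \<Longrightarrow> b \<in> carrier_vec nb \<Longrightarrow> vec_kron a b \<in> carrier_vec (na * nb)"
  by (metis carrier_vecD carrier_vecI dim_vec_kron)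

lemma kron_mult_vec_kron:
  assumes A: "A \<in> carrier_mat r1 c1" and B: "B \<in> carrier_mat r2 c2"
    and a: "a \<in> carrier_vec c1" and b: "b \<in> carrier_vec c2"
  shows "kron A B *\<^sub>v vec_kron a b = vec_kron (A *\<^sub>v a) (B *\<^sub>v b)"
proof (rule eq_vecI)
  fix i assume "i < dim_vec (vec_kron (A *\<^sub>v a) (B *\<^sub>v b))"
  then have i: "i < r1 * r2" using A B by auto
  have "(kron A B *\<^sub>v vec_kron a b) $ i = (\<Sum>k<c1*c2. kron A B $$ (i,k) * vec_kron a b $ k)"
    using A B a b i by (simp add: scalar_prod_def atLeast0LessThan)
  also have "\<dots> = (\<Sum>x<c1. \<Sum>y<c2. kron A B $$ (i,y + x*c2) * vec_kron a b $ (y + x*c2))"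
    by (rule sum_mult_product)
  also have "\<dots> = (\<Sum>x<c1. \<Sum>y<c2. (A $$ (i div r2, x) * a $ x) * (B $$ (i mod r2, y) * b $ y))"
  proof (intro sum.cong refl)
    fix x y assume "x \<in> {..<c1}" "y \<in> {..<c2}"
    then show "kron A B $$ (i,y + x*c2) * vec_kron a b $ (y + x*c2) =
               (A $$ (i div r2, x) * a $ x) * (B $$ (i mod r2, y) * b $ y)"
      using A B a b i add_mult_less_mult[of x c1 y c2] div_mod_add_mult[of y c2 x]
      by (simp add: index_kron index_vec_kron)
  qed
  also have "\<dots> = (\<Sum>x<c1. A $$ (i div r2, x) * a $ x) * (\<Sum>y<c2. B $$ (i mod r2, y) * b $ y)"
    by (simp add: sum_product)
  also have "\<dots> = vec_kron (A *\<^sub>v a) (B *\<^sub>v b) $ i"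
    using A B a b i div_mod_less_of_less_mult[OF i]
    by (simp add: index_vec_kron scalar_prod_def atLeast0LessThan)
  finally show "(kron A B *\<^sub>v vec_kron a b) $ i = vec_kron (A *\<^sub>v a) (B *\<^sub>v b) $ i" .
qed (use A B in auto)

lemma kron_sum_mult_vec_kron:
  assumes A: "A \<in> carrier_mat na na" and B: "B \<in> carrier_mat nb nb"
    and a: "a \<in> carrier_vec na" and b: "b \<in> carrier_vec nb"
  shows "kron_sum A B *\<^sub>v vec_kron a b = vec_kron (A *\<^sub>v a) b + vec_kron a (B *\<^sub>v b)"
proof -
  have "vec_kron a b \<in> carrier_vec (na * nb)" using a b by (rule vec_kron_carrier)
  then have "kron_sum A B *\<^sub>v vec_kron a b =
             kron A (1\<^sub>m nb) *\<^sub>v vec_kron a b + kron (1\<^sub>m na) B *\<^sub>v vec_kron a b"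
    unfolding kron_sum_def using A B
    by (subst add_mult_distrib_mat_vec[of _ "na * nb" "na * nb"]) auto
  also have "\<dots> = vec_kron (A *\<^sub>v a) b + vec_kron a (B *\<^sub>v b)"
    using A B a b by (simp add: kron_mult_vec_kron[of _ na na _ nb nb])
  finally show ?thesis .
qed

fun vec_kron_pow :: "real Matrix.vec \<Rightarrow> nat \<Rightarrow> real Matrix.vec" where
  "vec_kron_pow u 0 = Matrix.vec 1 (\<lambda>_. 1)"
| "vec_kron_pow u (Suc r) = vec_kron (vec_kron_pow u r) u"

lemma dim_vec_kron_pow [simp]: "dim_vec (vec_kron_pow u r) = dim_vec u ^ r"
  by (induction r) (auto simp: mult.commute)

lemma vec_kron_pow_carrier: "u \<in> carrier_vec p \<Longrightarrow> vec_kron_pow u r \<in> carrier_vec (p ^ r)"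
  by (metis carrier_vecD carrier_vecI dim_vec_kron_pow)

lemma has_derivative_vec_kron_pow:
  fixes u :: "real \<Rightarrow> real Matrix.vec"
  assumes A: "A \<in> carrier_mat p p" and u: "\<And>s. u s \<in> carrier_vec p"
    and der: "\<And>k. k < p \<Longrightarrow> ((\<lambda>s. u s $ k) has_real_derivative (- (A *\<^sub>v u t)) $ k) (at t within S)"
  shows "i < p ^ r \<Longrightarrow> ((\<lambda>s. vec_kron_pow (u s) r $ i) has_real_derivative
           (- (kron_sum_pow A r *\<^sub>v vec_kron_pow (u t) r)) $ i) (at t within S)"
proof (induction r arbitrary: i)
  case 0
  then show ?case by (simp add: scalar_prod_def)
next
  case (Suc r)
  define z where "z = vec_kron_pow (u t) r"
  define Ar where "Ar = kron_sum_pow A r"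
  have dim_u: "\<And>s. dim_vec (u s) = p" using u by auto
  have i: "i < p ^ r * p" using Suc.prems by (simp add: mult.commute)
  note i_div_mod = div_mod_less_of_less_mult[OF i]
  have dim_Arz: "dim_vec (Ar *\<^sub>v z) = p ^ r"
    unfolding Ar_def z_def by (simp add: carrier_matD[OF kron_sum_pow_carrier[OF A]])
  have dim_Au: "dim_vec (A *\<^sub>v u t) = p" and dim_z: "dim_vec z = p ^ r"
    using A dim_u by (simp_all add: z_def)
  have "kron_sum_pow A (Suc r) *\<^sub>v vec_kron_pow (u t) (Suc r) = vec_kron (Ar *\<^sub>v z) (u t) + vec_kron z (A *\<^sub>v u t)"
    unfolding Ar_def z_def
    using kron_sum_mult_vec_kron[OF kron_sum_pow_carrier[OF A] A vec_kron_pow_carrier[OF u] u] by simp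
  then have "(- (kron_sum_pow A (Suc r) *\<^sub>v vec_kron_pow (u t) (Suc r))) $ i =
      - (vec_kron (Ar *\<^sub>v z) (u t) $ i + vec_kron z (A *\<^sub>v u t) $ i)"
    using i dim_Arz dim_Au dim_z dim_u by simp
  also have "\<dots> = (- (Ar *\<^sub>v z)) $ (i div p) * u t $ (i mod p) + (- (A *\<^sub>v u t)) $ (i mod p) * z $ (i div p)"
    using i i_div_mod dim_Arz dim_Au dim_z dim_u by (simp add: index_vec_kron)
  finally have rhs: "(- (kron_sum_pow A (Suc r) *\<^sub>v vec_kron_pow (u t) (Suc r))) $ i =
      (- (Ar *\<^sub>v z)) $ (i div p) * u t $ (i mod p) + (- (A *\<^sub>v u t)) $ (i mod p) * z $ (i div p)" .
  have "(\<lambda>s. vec_kron_pow (u s) (Suc r) $ i) = (\<lambda>s. vec_kron_pow (u s) r $ (i div p) * u s $ (i mod p))"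
    using i dim_u by (auto simp: index_vec_kron)
  then show ?case
    unfolding rhs using DERIV_mult[OF Suc.IH[OF i_div_mod[THEN conjunct1]] der[OF i_div_mod[THEN conjunct2]]]
    by (simp add: Ar_def z_def)
qed

lemma continuous_on_vec_kron_pow:
  fixes u :: "real \<Rightarrow> real Matrix.vec"
  assumes u: "\<And>s. u s \<in> carrier_vec p" and cont: "\<And>k. k < p \<Longrightarrow> continuous_on S (\<lambda>s. u s $ k)"
  shows "i < p ^ r \<Longrightarrow> continuous_on S (\<lambda>s. vec_kron_pow (u s) r $ i)"
proof (induction r arbitrary: i)
  case (Suc r)
  have i: "i < p ^ r * p" using Suc.prems by (simp add: mult.commute)
  have eq: "(\<lambda>s. vec_kron_pow (u s) (Suc r) $ i) = (\<lambda>s. vec_kron_pow (u s) r $ (i div p) * u s $ (i mod p))"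
    using i u[THEN carrier_vecD] by (auto simp: index_vec_kron)
  show ?case
    unfolding eq using div_mod_less_of_less_mult[OF i] by (intro continuous_intros Suc.IH cont) auto
qed simp

fun kron_pow_diag_index :: "nat \<Rightarrow> nat \<Rightarrow> nat \<Rightarrow> nat" where
  "kron_pow_diag_index p k 0 = 0"
| "kron_pow_diag_index p k (Suc r) = kron_pow_diag_index p k r * p + k"

lemma vec_kron_pow_diag:
  assumes "k < dim_vec u"
  shows "kron_pow_diag_index (dim_vec u) k r < dim_vec u ^ r \<and>
         vec_kron_pow u r $ kron_pow_diag_index (dim_vec u) k r = (u $ k) ^ r"
proof (induction r)
  case (Suc r)
  define j where "j = kron_pow_diag_index (dim_vec u) k r"
  have "j * dim_vec u + k < dim_vec u ^ r * dim_vec u"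
    using Suc.IH assms add_mult_less_mult[of j "dim_vec u ^ r" k "dim_vec u"] by (simp add: j_def)
  moreover have "(j * dim_vec u + k) div dim_vec u = j" "(j * dim_vec u + k) mod dim_vec u = k"
    using div_mod_add_mult[OF assms, of j] by (simp_all add: add.commute)
  ultimately show ?case using Suc.IH by (simp add: index_vec_kron j_def mult.commute)
qed simp

section \<open>Quadratic forms\<close>

definition pos_quad_form :: "nat \<Rightarrow> real mat \<Rightarrow> bool" where
  "pos_quad_form N X \<longleftrightarrow> X \<in> carrier_mat N N \<and> (\<forall>v \<in> carrier_vec N. v \<noteq> 0\<^sub>v N \<longrightarrow> v \<bullet> (X *\<^sub>v v) > 0)"

lemma pos_def_iff: "pos_def N X \<longleftrightarrow> pos_quad_form N X \<and> transpose_mat X = X"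
  unfolding pos_def_def pos_quad_form_def symmetric_mat_def by auto

lemma scalar_prod_self_eq_sum:
  fixes v :: "real Matrix.vec"
  shows "v \<in> carrier_vec N \<Longrightarrow> v \<bullet> v = (\<Sum>i<N. (v $ i)\<^sup>2)"
  by (simp add: scalar_prod_def atLeast0LessThan power2_eq_square)

lemma scalar_prod_self_nonneg: "(v :: real Matrix.vec) \<bullet> v \<ge> 0"
  by (simp add: scalar_prod_def sum_nonneg)

lemma scalar_prod_mat_mult_vec_eq_sum:
  fixes W :: "real mat"
  assumes "W \<in> carrier_mat N N" "a \<in> carrier_vec N" "b \<in> carrier_vec N"
  shows "a \<bullet> (W *\<^sub>v b) = (\<Sum>i<N. \<Sum>j<N. W $$ (i,j) * (a $ i * b $ j))"
  using assms by (simp add: scalar_prod_def atLeast0LessThan sum_distrib_left row_def)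
     (intro sum.cong refl, simp add: mult_ac)

lemma compactin_sum_squares_eq_1:
  assumes I: "finite I"
  defines "T \<equiv> product_topology (\<lambda>_. euclideanreal) I"
  shows "compactin T {w \<in> topspace T. (\<Sum>i\<in>I. (w i)\<^sup>2) = (1::real)}"
proof (rule closed_compactin)
  show "compactin T (PiE I (\<lambda>_. {-1..1}))" unfolding T_def by (simp add: compactin_PiE)
  show "{w \<in> topspace T. (\<Sum>i\<in>I. (w i)\<^sup>2) = 1} \<subseteq> PiE I (\<lambda>_. {-1..1})"
  proof
    fix w assume w: "w \<in> {w \<in> topspace T. (\<Sum>i\<in>I. (w i)\<^sup>2) = 1}"
    have "\<bar>w i\<bar> \<le> 1" if "i \<in> I" for i
    proof -
      have "(w i)\<^sup>2 \<le> (\<Sum>i\<in>I. (w i)\<^sup>2)" using that I by (intro member_le_sum) auto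
      then show ?thesis using w abs_le_square_iff[of "w i" 1] by simp
    qed
    then show "w \<in> PiE I (\<lambda>_. {-1..1})" using w unfolding T_def by (auto simp: PiE_iff abs_le_iff)
  qed
  have "continuous_map T euclideanreal (\<lambda>w. \<Sum>i\<in>I. (w i)\<^sup>2)"
    unfolding T_def using I by (intro continuous_intros) auto
  from closedin_continuous_map_preimage[OF this, of "{1}"]
  show "closedin T {w \<in> topspace T. (\<Sum>i\<in>I. (w i)\<^sup>2) = 1}" by simp
qed

lemma scalar_prod_self_eq_0_iff: "v \<in> carrier_vec N \<Longrightarrow> (v :: real Matrix.vec) \<bullet> v = 0 \<longleftrightarrow> v = 0\<^sub>v N"
  by (auto simp: scalar_prod_self_eq_sum sum_nonneg_eq_0_iff)

lemma quad_form_lower_bound_of_unit_sphere: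
  fixes X :: "real mat"
  assumes X: "X \<in> carrier_mat N N"
    and sphere: "\<And>w. w \<in> carrier_vec N \<Longrightarrow> w \<bullet> w = 1 \<Longrightarrow> m \<le> w \<bullet> (X *\<^sub>v w)"
    and v: "v \<in> carrier_vec N"
  shows "m * (v \<bullet> v) \<le> v \<bullet> (X *\<^sub>v v)"
proof (cases "v = 0\<^sub>v N")
  case False
  then have vv: "v \<bullet> v > 0" using scalar_prod_self_nonneg[of v] scalar_prod_self_eq_0_iff[OF v] by linarith
  define s where "s = sqrt (v \<bullet> v)"
  have s: "s > 0" "s * s = v \<bullet> v" using vv unfolding s_def by auto
  define w where "w = (1 / s) \<cdot>\<^sub>v v"
  have w: "w \<in> carrier_vec N" unfolding w_def using v by simp
  have "w \<bullet> w = (v \<bullet> v) / (s * s)" and wXw: "w \<bullet> (X *\<^sub>v w) = (v \<bullet> (X *\<^sub>v v)) / (s * s)"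
    unfolding w_def using X v by (simp_all add: mult_mat_vec[OF X v])
  then have "m \<le> (v \<bullet> (X *\<^sub>v v)) / (v \<bullet> v)" using sphere[OF w] s vv by simp
  then show ?thesis using vv by (simp add: pos_le_divide_eq)
qed (use X in simp)

text \<open>The minimum of the form on the compact unit sphere is the constant.\<close>
lemma pos_quad_form_lower_bound:
  assumes "pos_quad_form N X"
  obtains c where "c > 0" "\<And>v. v \<in> carrier_vec N \<Longrightarrow> c * (v \<bullet> v) \<le> v \<bullet> (X *\<^sub>v v)"
proof -
  have X: "X \<in> carrier_mat N N" and pos: "\<And>v. v \<in> carrier_vec N \<Longrightarrow> v \<noteq> 0\<^sub>v N \<Longrightarrow> v \<bullet> (X *\<^sub>v v) > 0"
    using assms unfolding pos_quad_form_def by auto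
  show ?thesis
  proof (cases "N = 0")
    case True
    then show ?thesis
      using that[of 1] by (simp add: scalar_prod_self_eq_sum scalar_prod_mat_mult_vec_eq_sum[OF X])
  next
    case False
    define T where "T = product_topology (\<lambda>_::nat. euclideanreal) {..<N}"
    define f where "f w = (\<Sum>i<N. \<Sum>j<N. X $$ (i,j) * (w i * w j))" for w :: "nat \<Rightarrow> real"
    define S where "S = {w \<in> topspace T. (\<Sum>i<N. (w i)\<^sup>2) = 1}"
    have f_vec: "f w = Matrix.vec N w \<bullet> (X *\<^sub>v Matrix.vec N w)" for w
      unfolding f_def by (subst scalar_prod_mat_mult_vec_eq_sum[OF X]) auto
    have "continuous_map T euclideanreal f"
      unfolding T_def f_def by (intro continuous_intros) auto
    then have "compact (f ` S)"
      using image_compactin[OF compactin_sum_squares_eq_1[of "{..<N}"], of euclideanreal f]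
      unfolding S_def T_def by simp
    moreover have "(\<lambda>i. if i = 0 then 1 else if i < N then 0 else undefined) \<in> S"
      using False unfolding S_def T_def by (auto simp: PiE_iff extensional_def sum.remove[of "{..<N}" 0])
    ultimately obtain w0 where w0: "w0 \<in> S" and min: "\<And>w. w \<in> S \<Longrightarrow> f w0 \<le> f w"
      using compact_attains_inf[of "f ` S"] by blast
    have "Matrix.vec N w0 \<bullet> Matrix.vec N w0 = 1"
      using w0 by (simp add: scalar_prod_self_eq_sum[of _ N] S_def)
    then have "f w0 > 0" unfolding f_vec by (intro pos) auto
    moreover have "f w0 \<le> v \<bullet> (X *\<^sub>v v)" if "v \<in> carrier_vec N" "v \<bullet> v = 1" for v
    proof -
      have "restrict (\<lambda>i. v $ i) {..<N} \<in> S"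
        using that unfolding S_def T_def by (simp add: scalar_prod_self_eq_sum)
      then have "f w0 \<le> f (restrict (\<lambda>i. v $ i) {..<N})" by (rule min)
      also have "\<dots> = v \<bullet> (X *\<^sub>v v)" unfolding f_def scalar_prod_mat_mult_vec_eq_sum[OF X that(1) that(1)] by simp
      finally show ?thesis .
    qed
    ultimately show ?thesis using that quad_form_lower_bound_of_unit_sphere[OF X] by blast
  qed
qed

lemma pos_quad_forms_uniform_lower_bound:
  assumes "finite Xs" "\<And>X. X \<in> Xs \<Longrightarrow> pos_quad_form N X"
  obtains c where "c > 0" "\<And>X v. X \<in> Xs \<Longrightarrow> v \<in> carrier_vec N \<Longrightarrow> c * (v \<bullet> v) \<le> v \<bullet> (X *\<^sub>v v)"
  using assms
proof (induction Xs arbitrary: thesis rule: finite_induct)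
  case empty
  show ?case by (rule empty.prems(1)[of 1]) auto
next
  case (insert X Xs)
  obtain c where c: "c > 0" "\<And>Y v. Y \<in> Xs \<Longrightarrow> v \<in> carrier_vec N \<Longrightarrow> c * (v \<bullet> v) \<le> v \<bullet> (Y *\<^sub>v v)"
    using insert.IH insert.prems(2) by blast
  obtain d where d: "d > 0" "\<And>v. v \<in> carrier_vec N \<Longrightarrow> d * (v \<bullet> v) \<le> v \<bullet> (X *\<^sub>v v)"
    using pos_quad_form_lower_bound insert.prems(2) by blast
  have "min c d * (v \<bullet> v) \<le> v \<bullet> (Y *\<^sub>v v)" if "Y \<in> insert X Xs" "v \<in> carrier_vec N" for Y v
  proof -
    have "min c d * (v \<bullet> v) \<le> (if Y = X then d else c) * (v \<bullet> v)"
      using scalar_prod_self_nonneg[of v] by (intro mult_right_mono) auto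
    also have "\<dots> \<le> v \<bullet> (Y *\<^sub>v v)" using c d that by auto
    finally show ?thesis .
  qed
  moreover have "min c d > 0" using c d by simp
  ultimately show ?case using insert.prems(1) by blast
qed

lemma quad_form_abs_le:
  fixes X :: "real mat"
  assumes X: "X \<in> carrier_mat N N"
  obtains C where "C > 0" "\<And>v. v \<in> carrier_vec N \<Longrightarrow> \<bar>v \<bullet> (X *\<^sub>v v)\<bar> \<le> C * (v \<bullet> v)"
proof
  define A where "A = (\<Sum>i<N. \<Sum>j<N. \<bar>X $$ (i,j)\<bar>)"
  have A: "A \<ge> 0" unfolding A_def by (intro sum_nonneg) auto
  show "A + 1 > 0" using A by simp
  fix v :: "real Matrix.vec" assume v: "v \<in> carrier_vec N"
  have sq: "(v $ i)\<^sup>2 \<le> v \<bullet> v" if "i < N" for i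
    unfolding scalar_prod_self_eq_sum[OF v] using that by (intro member_le_sum) auto
  have prod: "\<bar>v $ i * v $ j\<bar> \<le> v \<bullet> v" if "i < N" "j < N" for i j
  proof -
    have "2 * (\<bar>v $ i\<bar> * \<bar>v $ j\<bar>) \<le> (v $ i)\<^sup>2 + (v $ j)\<^sup>2"
      using sum_squares_bound[of "\<bar>v $ i\<bar>" "\<bar>v $ j\<bar>"] by (simp add: power2_abs)
    then show ?thesis using sq[OF that(1)] sq[OF that(2)] by (simp add: abs_mult)
  qed
  have "\<bar>v \<bullet> (X *\<^sub>v v)\<bar> \<le> (\<Sum>i<N. \<Sum>j<N. \<bar>X $$ (i,j)\<bar> * \<bar>v $ i * v $ j\<bar>)"
    unfolding scalar_prod_mat_mult_vec_eq_sum[OF X v v]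
    by (rule order.trans[OF sum_abs sum_mono], rule order.trans[OF sum_abs]) (simp add: abs_mult)
  also have "\<dots> \<le> (\<Sum>i<N. \<Sum>j<N. \<bar>X $$ (i,j)\<bar> * (v \<bullet> v))"
    using prod by (intro sum_mono mult_left_mono) auto
  also have "\<dots> = A * (v \<bullet> v)" by (simp add: A_def sum_distrib_right)
  also have "\<dots> \<le> (A + 1) * (v \<bullet> v)" using scalar_prod_self_nonneg[of v] by (intro mult_right_mono) auto
  finally show "\<bar>v \<bullet> (X *\<^sub>v v)\<bar> \<le> (A + 1) * (v \<bullet> v)" .
qed

lemma pos_def_inverse:
  assumes "pos_def N P"
  obtains W where "W \<in> carrier_mat N N" "W * P = 1\<^sub>m N" "P * W = 1\<^sub>m N" "transpose_mat W = W"
proof -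
  have P: "P \<in> carrier_mat N N" and P_sym: "transpose_mat P = P"
    and pos: "\<And>v. v \<in> carrier_vec N \<Longrightarrow> v \<noteq> 0\<^sub>v N \<Longrightarrow> v \<bullet> (P *\<^sub>v v) > 0"
    using assms unfolding pos_def_def symmetric_mat_def by auto
  have "det P \<noteq> 0"
  proof
    assume "det P = 0"
    then obtain v where "v \<in> carrier_vec N" "v \<noteq> 0\<^sub>v N" "P *\<^sub>v v = 0\<^sub>v N"
      using det_0_iff_vec_prod_zero[OF P] by auto
    with pos show False by fastforce
  qed
  then obtain W where W: "W \<in> carrier_mat N N" and WP: "W * P = 1\<^sub>m N" and PW: "P * W = 1\<^sub>m N"
    using det_non_zero_imp_unit[OF P, of undefined] unfolding Units_def ring_mat_def by auto
  have WtP: "transpose_mat W * P = 1\<^sub>m N"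
    using P W P_sym PW transpose_mult[of P N N W N] by simp
  have "transpose_mat W = transpose_mat W * (P * W)" using PW W by simp
  also have "\<dots> = (transpose_mat W * P) * W" using P W by (simp add: assoc_mult_mat[of _ N N _ N _ N])
  also have "\<dots> = W" using WtP W by simp
  finally show ?thesis using that W WP PW by blast
qed

lemma pos_def_congruence:
  assumes K: "K \<in> carrier_mat p n" and KK: "K * transpose_mat K = 1\<^sub>m p" and P: "pos_def n P"
  shows "pos_def p (K * P * transpose_mat K)"
proof -
  have Pc: "P \<in> carrier_mat n n" and P_sym: "transpose_mat P = P"
    and pos: "\<And>v. v \<in> carrier_vec n \<Longrightarrow> v \<noteq> 0\<^sub>v n \<Longrightarrow> v \<bullet> (P *\<^sub>v v) > 0"
    using P unfolding pos_def_def symmetric_mat_def by auto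
  have "w \<bullet> ((K * P * transpose_mat K) *\<^sub>v w) > 0" if w: "w \<in> carrier_vec p" "w \<noteq> 0\<^sub>v p" for w
  proof -
    define y where "y = transpose_mat K *\<^sub>v w"
    have y: "y \<in> carrier_vec n" unfolding y_def using K w by auto
    have "K *\<^sub>v y = w"
      unfolding y_def using K w KK by (simp add: assoc_mult_mat_vec[symmetric, of _ p n])
    then have "y \<noteq> 0\<^sub>v n" using w K by auto
    have "w \<bullet> ((K * P * transpose_mat K) *\<^sub>v w) = w \<bullet> (K *\<^sub>v (P *\<^sub>v y))"
      unfolding y_def using K Pc w by (simp add: assoc_mult_mat_vec[of _ p n _ p] assoc_mult_mat_vec[of _ p n _ n])
    also have "\<dots> = y \<bullet> (P *\<^sub>v y)"
      unfolding y_def using K Pc w by (simp add: transpose_vec_mult_scalar[of K p n])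
    finally show ?thesis using pos[OF y \<open>y \<noteq> 0\<^sub>v n\<close>] by simp
  qed
  moreover have "transpose_mat (K * P * transpose_mat K) = K * P * transpose_mat K"
  proof -
    have "transpose_mat (K * P * transpose_mat K) = transpose_mat (K * (P * transpose_mat K))"
      using K Pc by (simp add: assoc_mult_mat[of _ p n _ n _ p])
    also have "\<dots> = transpose_mat (P * transpose_mat K) * transpose_mat K"
      using K Pc by (intro transpose_mult[of _ p n]) auto
    also have "transpose_mat (P * transpose_mat K) = K * transpose_mat P"
      using K Pc by (simp add: transpose_mult[of P n n])
    finally show ?thesis unfolding P_sym .
  qed
  ultimately show ?thesis using K Pc unfolding pos_def_def symmetric_mat_def by auto
qed

lemma has_real_derivative_quad_form:
  fixes W :: "real mat" and z :: "real \<Rightarrow> real Matrix.vec"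
  assumes W: "W \<in> carrier_mat N N" and z: "\<And>s. z s \<in> carrier_vec N" and dz: "dz \<in> carrier_vec N"
    and der: "\<And>i. i < N \<Longrightarrow> ((\<lambda>s. z s $ i) has_real_derivative dz $ i) (at t within S)"
  shows "((\<lambda>s. z s \<bullet> (W *\<^sub>v z s)) has_real_derivative dz \<bullet> (W *\<^sub>v z t) + z t \<bullet> (W *\<^sub>v dz)) (at t within S)"
proof -
  have "((\<lambda>s. \<Sum>i<N. \<Sum>j<N. W $$ (i,j) * (z s $ i * z s $ j)) has_real_derivative
      (\<Sum>i<N. \<Sum>j<N. W $$ (i,j) * (dz $ i * z t $ j + dz $ j * z t $ i))) (at t within S)"
    by (intro DERIV_sum DERIV_cmult DERIV_mult der) auto
  moreover have "(\<Sum>i<N. \<Sum>j<N. W $$ (i,j) * (dz $ i * z t $ j + dz $ j * z t $ i)) =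
      dz \<bullet> (W *\<^sub>v z t) + z t \<bullet> (W *\<^sub>v dz)"
    unfolding scalar_prod_mat_mult_vec_eq_sum[OF W dz z] scalar_prod_mat_mult_vec_eq_sum[OF W z dz]
    by (simp add: sum.distrib[symmetric] algebra_simps)
  ultimately show ?thesis using scalar_prod_mat_mult_vec_eq_sum[OF W z z] by simp
qed

section \<open>Functions differentiable off a locally finite set\<close>

lemma nonincreasing_of_deriv_nonpos_except:
  fixes g g' :: "real \<Rightarrow> real"
  assumes cont: "continuous_on {0..} g"
    and D: "\<forall>T. finite (D \<inter> {0..T})"
    and der: "\<And>t. t > 0 \<Longrightarrow> t \<notin> D \<Longrightarrow> (g has_real_derivative g' t) (at t within {0..})"
    and nonpos: "\<And>t. t > 0 \<Longrightarrow> t \<notin> D \<Longrightarrow> g' t \<le> 0"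
    and ab: "0 \<le> a" "a \<le> b"
  shows "g b \<le> g a"
proof -
  define S where "S = insert a (D \<inter> {0..b})"
  define f' where "f' x = (if x \<in> S then 0 else g' x)" for x
  have "(f' has_integral g b - g a) {a..b}"
  proof (rule fundamental_theorem_of_calculus_strong)
    show "finite S" unfolding S_def using D by auto
    show "continuous_on {a..b} g" using ab by (intro continuous_on_subset[OF cont]) auto
  next
    fix x assume x: "x \<in> {a..b} - S"
    then have "x > 0" "x \<notin> D" using ab unfolding S_def by auto
    moreover have "at x within {0..} = at x" using \<open>x > 0\<close> by (intro at_within_interior) auto
    ultimately have "(g has_real_derivative g' x) (at x)" using der by metis
    then show "(g has_vector_derivative f' x) (at x)"
      using x by (simp add: f'_def has_real_derivative_iff_has_vector_derivative)
  qed (use ab in auto)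
  moreover have "f' x \<le> 0" if "x \<in> {a..b}" for x
    using that ab nonpos unfolding f'_def S_def by auto
  ultimately have "g b - g a \<le> 0" using has_integral_le[OF _ has_integral_0] by blast
  then show ?thesis by simp
qed

lemma constant_of_deriv_zero_except:
  fixes g :: "real \<Rightarrow> real"
  assumes cont: "continuous_on {0..} g"
    and D: "\<forall>T. finite (D \<inter> {0..T})"
    and der: "\<And>t. t > 0 \<Longrightarrow> t \<notin> D \<Longrightarrow> (g has_real_derivative 0) (at t within {0..})"
    and t: "t \<ge> 0"
  shows "g t = g 0"
proof -
  have "g t \<le> g 0"
    by (rule nonincreasing_of_deriv_nonpos_except[OF cont D der]) (use t in auto)
  moreover have "- g t \<le> - g 0"
  proof (rule nonincreasing_of_deriv_nonpos_except[OF _ D, of "\<lambda>s. - g s"])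
    show "continuous_on {0..} (\<lambda>s. - g s)" by (intro continuous_intros cont)
    show "((\<lambda>s. - g s) has_real_derivative - 0) (at s within {0..})" if "s > 0" "s \<notin> D" for s
      using DERIV_minus[OF der[OF that]] .
  qed (use t in auto)
  ultimately show ?thesis by simp
qed

lemma exp_decay_of_deriv_le:
  fixes V V' :: "real \<Rightarrow> real"
  assumes cont: "continuous_on {0..} V"
    and D: "\<forall>T. finite (D \<inter> {0..T})"
    and der: "\<And>t. t > 0 \<Longrightarrow> t \<notin> D \<Longrightarrow> (V has_real_derivative V' t) (at t within {0..})"
    and le: "\<And>t. t > 0 \<Longrightarrow> t \<notin> D \<Longrightarrow> V' t \<le> - lam * V t"
    and t: "t \<ge> 0"
  shows "V t \<le> V 0 * exp (- lam * t)"
proof -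
  define g where "g s = V s * exp (lam * s)" for s
  have "g t \<le> g 0"
  proof (rule nonincreasing_of_deriv_nonpos_except[OF _ D, of g])
    show "continuous_on {0..} g" unfolding g_def by (intro continuous_intros cont)
  next
    fix s :: real assume s: "s > 0" "s \<notin> D"
    show "(g has_real_derivative (V' s + lam * V s) * exp (lam * s)) (at s within {0..})"
      unfolding g_def using der[OF s] by (auto intro!: derivative_eq_intros simp: algebra_simps)
    show "(V' s + lam * V s) * exp (lam * s) \<le> 0"
      using le[OF s] by (intro mult_nonpos_nonneg) auto
  qed (use t in auto)
  then have "V t * exp (lam * t) * exp (- lam * t) \<le> V 0 * exp (- lam * t)"
    unfolding g_def by (intro mult_right_mono) auto
  then show ?thesis by (simp add: mult.assoc exp_add[symmetric])
qed

lemma tendsto_zero_of_scalar_prod_self_le_exp: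
  fixes q :: "real \<Rightarrow> real Matrix.vec"
  assumes lam: "lam > 0" and q: "\<And>t. q t \<in> carrier_vec N"
    and bound: "\<And>t. t \<ge> 0 \<Longrightarrow> q t \<bullet> q t \<le> B * exp (- lam * t)"
    and i: "i < N"
  shows "((\<lambda>t. q t $ i) \<longlongrightarrow> 0) at_top"
proof -
  have "((\<lambda>t. (q t $ i)\<^sup>2) \<longlongrightarrow> 0) at_top"
  proof (rule real_tendsto_sandwich[OF _ _ tendsto_const])
    show "((\<lambda>t. B * exp (- lam * t)) \<longlongrightarrow> 0) at_top" using lam by real_asymp
    have sq: "(q t $ i)\<^sup>2 \<le> q t \<bullet> q t" for t
      unfolding scalar_prod_self_eq_sum[OF q] using i by (intro member_le_sum) auto
    show "\<forall>\<^sub>F t in at_top. (q t $ i)\<^sup>2 \<le> B * exp (- lam * t)"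
      using eventually_ge_at_top[of "0::real"] by eventually_elim (use sq bound order_trans in blast)
  qed auto
  from tendsto_real_sqrt[OF this] show ?thesis by (simp add: tendsto_rabs_zero_iff)
qed

section \<open>A common quadratic Lyapunov function\<close>

lemma lyapunov_derivative_eq:
  fixes P W M :: "real mat"
  assumes P: "P \<in> carrier_mat N N" and W: "W \<in> carrier_mat N N" and M: "M \<in> carrier_mat N N"
    and PW: "P * W = 1\<^sub>m N" and W_sym: "transpose_mat W = W" and z: "z \<in> carrier_vec N"
  shows "(- (M *\<^sub>v z)) \<bullet> (W *\<^sub>v z) + z \<bullet> (W *\<^sub>v - (M *\<^sub>v z)) =
         - 2 * ((W *\<^sub>v z) \<bullet> ((M * P) *\<^sub>v (W *\<^sub>v z)))"
proof -
  define q where "q = W *\<^sub>v z"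
  have q: "q \<in> carrier_vec N" unfolding q_def using W z by simp
  have z_eq: "z = P *\<^sub>v q" unfolding q_def using P W z PW by (simp add: assoc_mult_mat_vec[symmetric, of _ N N _ N])
  have "z \<bullet> (W *\<^sub>v - (M *\<^sub>v z)) = (transpose_mat W *\<^sub>v z) \<bullet> (- (M *\<^sub>v z))"
    using W M z by (intro transpose_vec_mult_scalar[symmetric]) auto
  also have "\<dots> = (- (M *\<^sub>v z)) \<bullet> q"
    unfolding W_sym q_def using W M z by (intro comm_scalar_prod[of _ N]) auto
  finally have "(- (M *\<^sub>v z)) \<bullet> (W *\<^sub>v z) + z \<bullet> (W *\<^sub>v - (M *\<^sub>v z)) = - 2 * (q \<bullet> (M *\<^sub>v z))"
    unfolding q_def[symmetric] using q M z by (simp add: comm_scalar_prod[of q N "M *\<^sub>v z"])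
  also have "q \<bullet> (M *\<^sub>v z) = q \<bullet> ((M * P) *\<^sub>v q)" unfolding z_eq using M P q by simp
  finally show ?thesis unfolding q_def .
qed

text \<open>With \<open>W = P\<^sup>-\<^sup>1\<close> and \<open>q = W z\<close>, the Lyapunov function \<open>z\<^sup>T W z = q\<^sup>T P q\<close> has derivative
  \<open>-2 q\<^sup>T M P q\<close> along the mode \<open>M\<close>, which is uniformly bounded by \<open>-2c |q|\<^sup>2\<close>.\<close>
lemma switched_linear_lyapunov_decay:
  fixes z :: "real \<Rightarrow> real Matrix.vec" and A :: "real \<Rightarrow> real mat"
  assumes Ms: "finite Ms" "\<And>M. M \<in> Ms \<Longrightarrow> M \<in> carrier_mat N N \<and> pos_quad_form N (M * P)"
    and P: "P \<in> carrier_mat N N" and W: "W \<in> carrier_mat N N" and PW: "P * W = 1\<^sub>m N"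
    and W_sym: "transpose_mat W = W" and A: "\<And>t. t \<ge> 0 \<Longrightarrow> A t \<in> Ms"
    and z: "\<And>s. z s \<in> carrier_vec N" and cont: "\<And>i. i < N \<Longrightarrow> continuous_on {0..} (\<lambda>s. z s $ i)"
    and D: "\<forall>T. finite (D \<inter> {0..T})"
    and der: "\<And>t i. t \<ge> 0 \<Longrightarrow> t \<notin> D \<Longrightarrow> i < N \<Longrightarrow>
       ((\<lambda>s. z s $ i) has_real_derivative (- (A t *\<^sub>v z t)) $ i) (at t within {0..})"
  obtains lam where "lam > 0"
    "\<And>t. t \<ge> 0 \<Longrightarrow> z t \<bullet> (W *\<^sub>v z t) \<le> z 0 \<bullet> (W *\<^sub>v z 0) * exp (- lam * t)"
proof -
  have fin: "finite ((\<lambda>M. M * P) ` Ms)" and pos: "\<And>X. X \<in> (\<lambda>M. M * P) ` Ms \<Longrightarrow> pos_quad_form N X"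
    using Ms by auto
  obtain c where c: "c > 0"
    and c_img: "\<And>X v. X \<in> (\<lambda>M. M * P) ` Ms \<Longrightarrow> v \<in> carrier_vec N \<Longrightarrow> c * (v \<bullet> v) \<le> v \<bullet> (X *\<^sub>v v)"
    using pos_quad_forms_uniform_lower_bound[OF fin pos] by blast
  obtain C where C: "C > 0" and C_ge: "\<And>v. v \<in> carrier_vec N \<Longrightarrow> \<bar>v \<bullet> (P *\<^sub>v v)\<bar> \<le> C * (v \<bullet> v)"
    using quad_form_abs_le[OF P] by blast
  define q where "q s = W *\<^sub>v z s" for s
  have q: "q s \<in> carrier_vec N" for s unfolding q_def using W z by simp
  define V where "V s = z s \<bullet> (W *\<^sub>v z s)" for s
  have V_q: "V s = q s \<bullet> (P *\<^sub>v q s)" for s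
  proof -
    have "z s = P *\<^sub>v q s"
      unfolding q_def using P W z PW by (simp add: assoc_mult_mat_vec[symmetric, of _ N N _ N])
    then have "V s = (P *\<^sub>v q s) \<bullet> q s" unfolding V_def q_def[symmetric] by simp
    then show ?thesis using P q by (simp add: comm_scalar_prod[of _ N])
  qed
  define lam where "lam = 2 * c / C"
  have "V t \<le> V 0 * exp (- lam * t)" if "t \<ge> 0" for t
  proof (rule exp_decay_of_deriv_le[OF _ D _ _ that])
    show "continuous_on {0..} V"
      unfolding V_def scalar_prod_mat_mult_vec_eq_sum[OF W z z] by (intro continuous_intros cont) auto
  next
    fix t :: real assume t: "t > 0" "t \<notin> D"
    have M: "A t \<in> carrier_mat N N" using A Ms(2) t by auto
    show "(V has_real_derivative - 2 * (q t \<bullet> ((A t * P) *\<^sub>v q t))) (at t within {0..})"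
      unfolding V_def q_def lyapunov_derivative_eq[OF P W M PW W_sym z, symmetric]
      using der[of t] t by (intro has_real_derivative_quad_form[OF W z]) (use M z in auto)
    have "lam * V t \<le> lam * (C * (q t \<bullet> q t))"
      using c C C_ge[OF q, of t] unfolding V_q lam_def by (intro mult_left_mono) (auto simp: abs_le_iff)
    also have "\<dots> \<le> 2 * (q t \<bullet> ((A t * P) *\<^sub>v q t))"
      using c_img[OF imageI[OF A] q, of t] t C unfolding lam_def by simp
    finally show "- 2 * (q t \<bullet> ((A t * P) *\<^sub>v q t)) \<le> - lam * V t" by simp
  qed
  moreover have "lam > 0" unfolding lam_def using c C by simp
  ultimately show ?thesis using that unfolding V_def by blast
qed

lemma switched_linear_tendsto_zero:
  fixes z :: "real \<Rightarrow> real Matrix.vec" and A :: "real \<Rightarrow> real mat"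
  assumes Ms: "finite Ms" "\<And>M. M \<in> Ms \<Longrightarrow> M \<in> carrier_mat N N \<and> pos_quad_form N (M * P)"
    and P: "pos_def N P" and A: "\<And>t. t \<ge> 0 \<Longrightarrow> A t \<in> Ms"
    and z: "\<And>s. z s \<in> carrier_vec N" and cont: "\<And>i. i < N \<Longrightarrow> continuous_on {0..} (\<lambda>s. z s $ i)"
    and D: "\<forall>T. finite (D \<inter> {0..T})"
    and der: "\<And>t i. t \<ge> 0 \<Longrightarrow> t \<notin> D \<Longrightarrow> i < N \<Longrightarrow>
       ((\<lambda>s. z s $ i) has_real_derivative (- (A t *\<^sub>v z t)) $ i) (at t within {0..})"
    and i: "i < N"
  shows "((\<lambda>t. z t $ i) \<longlongrightarrow> 0) at_top"
proof -
  have Pc: "P \<in> carrier_mat N N" using P unfolding pos_def_def by simp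
  obtain W where W: "W \<in> carrier_mat N N" and PW: "P * W = 1\<^sub>m N" and W_sym: "transpose_mat W = W"
    using pos_def_inverse[OF P] by metis
  obtain lam where lam: "lam > 0"
    and decay: "\<And>t. t \<ge> 0 \<Longrightarrow> z t \<bullet> (W *\<^sub>v z t) \<le> z 0 \<bullet> (W *\<^sub>v z 0) * exp (- lam * t)"
    using switched_linear_lyapunov_decay[OF Ms Pc W PW W_sym A z cont D der] by blast
  obtain c0 where c0: "c0 > 0" and c0_le: "\<And>v. v \<in> carrier_vec N \<Longrightarrow> c0 * (v \<bullet> v) \<le> v \<bullet> (P *\<^sub>v v)"
    using pos_quad_form_lower_bound P unfolding pos_def_iff by blast
  define q where "q s = W *\<^sub>v z s" for s
  have q: "q s \<in> carrier_vec N" for s unfolding q_def using W z by simp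
  have z_eq: "z s = P *\<^sub>v q s" for s
    unfolding q_def using Pc W z PW by (simp add: assoc_mult_mat_vec[symmetric, of _ N N _ N])
  have V_q: "z s \<bullet> (W *\<^sub>v z s) = q s \<bullet> (P *\<^sub>v q s)" for s
  proof -
    have "z s \<bullet> (W *\<^sub>v z s) = (P *\<^sub>v q s) \<bullet> q s" unfolding q_def[symmetric] using z_eq by simp
    then show ?thesis using Pc q by (simp add: comm_scalar_prod[of _ N])
  qed
  have q_bound: "q t \<bullet> q t \<le> z 0 \<bullet> (W *\<^sub>v z 0) / c0 * exp (- lam * t)" if "t \<ge> 0" for t
  proof -
    have "q t \<bullet> q t = c0 * (q t \<bullet> q t) / c0" using c0 by simp
    also have "\<dots> \<le> z 0 \<bullet> (W *\<^sub>v z 0) * exp (- lam * t) / c0"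
      using c0 c0_le[OF q, of t] decay[OF that] unfolding V_q by (intro divide_right_mono) auto
    finally show ?thesis by simp
  qed
  have q_lim: "((\<lambda>t. q t $ j) \<longlongrightarrow> 0) at_top" if "j < N" for j
    using tendsto_zero_of_scalar_prod_self_le_exp[OF lam q q_bound that] .
  have "((\<lambda>t. \<Sum>j<N. P $$ (i,j) * q t $ j) \<longlongrightarrow> (\<Sum>j<N. P $$ (i,j) * 0)) at_top"
    by (intro tendsto_intros q_lim) auto
  moreover have "z t $ i = (\<Sum>j<N. P $$ (i,j) * q t $ j)" for t
    unfolding z_eq using Pc q[of t] i by (simp add: scalar_prod_def atLeast0LessThan)
  ultimately show ?thesis by simp
qed

section \<open>Laplacians and the disagreement subspace\<close>

lemma signed_laplacian_row_sum:
  assumes "is_signed_laplacian n L" "i < n"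
  shows "(\<Sum>j<n. L $$ (i,j)) = 0"
proof -
  obtain A where A: "A \<in> carrier_mat n n" and L: "L = signed_laplacian A"
    using assms(1) unfolding is_signed_laplacian_def by auto
  have "(\<Sum>j<n. L $$ (i,j)) = (\<Sum>j<n. (if i = j then (\<Sum>l<n. A $$ (i,l)) else 0) - A $$ (i,j))"
    using A assms(2) unfolding L signed_laplacian_def by (intro sum.cong) auto
  also have "\<dots> = 0" using assms(2) by (simp add: sum_subtractf)
  finally show ?thesis .
qed

lemma weight_balanced_col_sum:
  assumes "weight_balanced n L" "L \<in> carrier_mat n n" "j < n"
  shows "(\<Sum>i<n. L $$ (i,j)) = 0"
proof -
  have "(transpose_mat L *\<^sub>v ones_vec n) $ j = 0" using assms unfolding weight_balanced_def by simp
  then show ?thesis using assms by (simp add: ones_vec_def scalar_prod_def atLeast0LessThan row_def)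
qed

lemma row_sum_eq_0_of_mult_ones:
  assumes "Q \<in> carrier_mat p n" "Q *\<^sub>v ones_vec n = 0\<^sub>v p" "a < p"
  shows "(\<Sum>b<n. Q $$ (a,b)) = 0"
proof -
  have "(Q *\<^sub>v ones_vec n) $ a = 0" using assms by simp
  then show ?thesis using assms by (simp add: ones_vec_def scalar_prod_def atLeast0LessThan row_def)
qed

lemma orthogonal_completion_by_ones:
  fixes Q :: "real mat"
  assumes Q: "Q \<in> carrier_mat (n - 1) n" and QQ: "Q * transpose_mat Q = 1\<^sub>m (n - 1)"
      and Q1: "Q *\<^sub>v ones_vec n = 0\<^sub>v (n - 1)" and n: "n \<ge> 1"
  defines "M \<equiv> Matrix.mat n n (\<lambda>(a,b). if a < n - 1 then Q $$ (a,b) else 1 / sqrt (real n))"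
  shows "M * transpose_mat M = 1\<^sub>m n"
proof (rule eq_matI)
  fix a c assume "a < dim_row (1\<^sub>m n)" "c < dim_col (1\<^sub>m n)"
  then have a: "a < n" and c: "c < n" by auto
  have QQ_entry: "(\<Sum>b<n. Q $$ (a,b) * Q $$ (c,b)) = (if a = c then 1 else 0)" if "a < n - 1" "c < n - 1"
    using arg_cong[OF QQ, of "\<lambda>X. X $$ (a,c)"] Q that
    by (simp add: scalar_prod_def atLeast0LessThan row_def col_def)
  have "(M * transpose_mat M) $$ (a,c) = (\<Sum>b<n. M $$ (a,b) * M $$ (c,b))"
    using a c by (simp add: M_def scalar_prod_def atLeast0LessThan row_def col_def)
  also have "\<dots> = 1\<^sub>m n $$ (a,c)"
  proof (cases "a < n - 1"; cases "c < n - 1")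
    assume "\<not> a < n - 1" "\<not> c < n - 1"
    then have "a = c" using a c by simp
    moreover have "(\<Sum>b<n. 1 / sqrt (real n) * (1 / sqrt (real n))) = 1" using n by simp
    ultimately show ?thesis using \<open>\<not> a < n - 1\<close> a by (simp add: M_def)
  qed (use a c QQ_entry row_sum_eq_0_of_mult_ones[OF Q Q1] in
        \<open>auto simp: M_def sum_divide_distrib[symmetric]\<close>)
  finally show "(M * transpose_mat M) $$ (a,c) = 1\<^sub>m n $$ (a,c)" .
qed (simp_all add: M_def)

lemma orthonormal_complement_of_ones:
  fixes Q :: "real mat"
  assumes Q: "Q \<in> carrier_mat (n - 1) n" and QQ: "Q * transpose_mat Q = 1\<^sub>m (n - 1)"
      and Q1: "Q *\<^sub>v ones_vec n = 0\<^sub>v (n - 1)" and n: "n \<ge> 1" and i: "i < n" and j: "j < n"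
  shows "(\<Sum>k<n-1. Q $$ (k,i) * Q $$ (k,j)) = (if i = j then 1 else 0) - 1 / real n"
proof -
  define M where "M = Matrix.mat n n (\<lambda>(a,b). if a < n - 1 then Q $$ (a,b) else 1 / sqrt (real n))"
  have M: "M \<in> carrier_mat n n" unfolding M_def by simp
  have "M * transpose_mat M = 1\<^sub>m n"
    unfolding M_def by (rule orthogonal_completion_by_ones[OF Q QQ Q1 n])
  then have "transpose_mat M * M = 1\<^sub>m n"
    using mat_mult_left_right_inverse[OF M] M by simp
  then have "(if i = j then 1 else 0) = (transpose_mat M * M) $$ (i,j)" using i j by simp
  also have "\<dots> = (\<Sum>k<n. M $$ (k,i) * M $$ (k,j))"
    using M i j by (simp add: scalar_prod_def atLeast0LessThan row_def col_def)
  also have "\<dots> = (\<Sum>k<n-1. M $$ (k,i) * M $$ (k,j)) + M $$ (n-1,i) * M $$ (n-1,j)"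
    using n by (cases n) auto
  also have "\<dots> = (\<Sum>k<n-1. Q $$ (k,i) * Q $$ (k,j)) + 1 / real n"
    using i j n by (simp add: M_def)
  finally show ?thesis by simp
qed

lemma mult_laplacian_eq_reduced_mult:
  fixes Q L :: "real mat"
  assumes Q: "Q \<in> carrier_mat (n - 1) n" and QQ: "Q * transpose_mat Q = 1\<^sub>m (n - 1)"
      and Q1: "Q *\<^sub>v ones_vec n = 0\<^sub>v (n - 1)" and n: "n \<ge> 1"
      and L: "L \<in> carrier_mat n n" and lap: "is_signed_laplacian n L"
  shows "Q * L = (Q * L * transpose_mat Q) * Q"
proof -
  define J where "J = Matrix.mat n n (\<lambda>_. 1::real)"
  have J: "J \<in> carrier_mat n n" unfolding J_def by simp
  have E: "transpose_mat Q * Q + (1 / real n) \<cdot>\<^sub>m J = 1\<^sub>m n"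
  proof (rule eq_matI)
    fix i j assume "i < dim_row (1\<^sub>m n)" "j < dim_col (1\<^sub>m n)"
    then have i: "i < n" and j: "j < n" by auto
    have "(transpose_mat Q * Q) $$ (i,j) = (\<Sum>k<n-1. Q $$ (k,i) * Q $$ (k,j))"
      using Q i j by (simp add: scalar_prod_def atLeast0LessThan row_def col_def)
    then show "(transpose_mat Q * Q + (1 / real n) \<cdot>\<^sub>m J) $$ (i, j) = 1\<^sub>m n $$ (i, j)"
      using orthonormal_complement_of_ones[OF Q QQ Q1 n i j] Q i j by (simp add: J_def)
  qed (use Q J in auto)
  have LJ: "L * J = 0\<^sub>m n n"
  proof (rule eq_matI)
    fix i j assume "i < dim_row (0\<^sub>m n n :: real mat)" "j < dim_col (0\<^sub>m n n :: real mat)"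
    then have i: "i < n" and j: "j < n" by auto
    have "(L * J) $$ (i,j) = (\<Sum>k<n. L $$ (i,k))"
      using L i j by (simp add: J_def scalar_prod_def atLeast0LessThan row_def col_def)
    then show "(L * J) $$ (i,j) = 0\<^sub>m n n $$ (i,j)" using signed_laplacian_row_sum[OF lap i] i j by simp
  qed (use L J in auto)
  have QL: "Q * L \<in> carrier_mat (n - 1) n" using Q L by simp
  have "Q * L = (Q * L) * (transpose_mat Q * Q + (1 / real n) \<cdot>\<^sub>m J)" unfolding E using right_mult_one_mat[OF QL] by simp
  also have "\<dots> = (Q * L) * (transpose_mat Q * Q) + (Q * L) * ((1 / real n) \<cdot>\<^sub>m J)"
    using QL Q J by (intro mult_add_distrib_mat[of _ "n - 1" n]) auto
  also have "(Q * L) * ((1 / real n) \<cdot>\<^sub>m J) = (1 / real n) \<cdot>\<^sub>m (Q * (L * J))"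
    using Q L J by (simp add: mult_smult_distrib[OF QL J] assoc_mult_mat[of _ "n - 1" n _ n _ n])
  also have "\<dots> = 0\<^sub>m (n - 1) n" using LJ Q by simp
  also have "(Q * L) * (transpose_mat Q * Q) = (Q * L * transpose_mat Q) * Q" using QL Q by simp
  finally have "Q * L = (Q * L * transpose_mat Q) * Q + 0\<^sub>m (n - 1) n" .
  moreover have "(Q * L * transpose_mat Q) * Q \<in> carrier_mat (n - 1) n" using Q L by auto
  ultimately show ?thesis by (metis right_add_zero_mat)
qed

lemma pos_quad_form_of_neg_def:
  assumes X: "X \<in> carrier_mat N N" and neg: "neg_def N (- X - transpose_mat X)"
  shows "pos_quad_form N X"
  unfolding pos_quad_form_def
proof (intro conjI X ballI impI)
  fix v :: "real Matrix.vec" assume v: "v \<in> carrier_vec N" "v \<noteq> 0\<^sub>v N"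
  have "v \<bullet> (transpose_mat X *\<^sub>v v) = (transpose_mat X *\<^sub>v v) \<bullet> v"
    using X v by (intro comm_scalar_prod[of _ N]) auto
  also have "\<dots> = v \<bullet> (X *\<^sub>v v)" using X v by (intro transpose_vec_mult_scalar) auto
  finally have "v \<bullet> ((- X - transpose_mat X) *\<^sub>v v) = - 2 * (v \<bullet> (X *\<^sub>v v))"
    using X v by (simp add: minus_mult_distrib_mat_vec[of _ N N] scalar_prod_minus_distrib[of _ N]
        scalar_prod_uminus_right)
  then show "v \<bullet> (X *\<^sub>v v) > 0" using neg v unfolding neg_def_def by auto
qed

lemma transpose_mult4:
  fixes A B C E :: "real mat"
  assumes "A \<in> carrier_mat n1 n2" "B \<in> carrier_mat n2 n3" "C \<in> carrier_mat n3 n4" "E \<in> carrier_mat n4 n5"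
  shows "transpose_mat (A * B * C * E) = transpose_mat E * transpose_mat C * transpose_mat B * transpose_mat A"
proof -
  have "transpose_mat (A * B * C * E) = transpose_mat E * transpose_mat (A * B * C)"
    by (rule transpose_mult[of _ n1 n4]) (use assms in auto)
  moreover have "transpose_mat (A * B * C) = transpose_mat C * transpose_mat (A * B)"
    by (rule transpose_mult[of _ n1 n3]) (use assms in auto)
  moreover have "transpose_mat (A * B) = transpose_mat B * transpose_mat A"
    by (rule transpose_mult[of _ n1 n2]) (use assms in auto)
  ultimately have "transpose_mat (A * B * C * E) =
      transpose_mat E * (transpose_mat C * (transpose_mat B * transpose_mat A))" by simp
  also have "\<dots> = transpose_mat E * transpose_mat C * transpose_mat B * transpose_mat A"
    using assms by (simp add: assoc_mult_mat[of "transpose_mat E" n5 n4 _ n3 _ n2]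
        assoc_mult_mat[of "transpose_mat E" n5 n4 _ n2 _ n1] assoc_mult_mat[of "transpose_mat C" n4 n3 _ n2 _ n1])
  finally show ?thesis .
qed

text \<open>The two terms of the LMI are transposes of each other, and \<open>Q\<^sup>\<otimes>\<^sup>r\<close> intertwines
  \<open>L\<^sup>\<oplus>\<^sup>r\<close> with \<open>R\<^sup>\<oplus>\<^sup>r\<close>.\<close>
lemma pos_quad_form_of_kron_lmi:
  fixes Q L R P :: "real mat"
  assumes Q: "Q \<in> carrier_mat p n" and L: "L \<in> carrier_mat n n" and R: "R \<in> carrier_mat p p"
    and QL: "Q * L = R * Q" and P: "P \<in> carrier_mat (n ^ r) (n ^ r)" and P_sym: "transpose_mat P = P"
    and lmi: "neg_def (p ^ r)
           (- (kron_pow Q r * kron_sum_pow L r * P * transpose_mat (kron_pow Q r))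
            - kron_pow Q r * P * transpose_mat (kron_sum_pow L r) * transpose_mat (kron_pow Q r))"
  shows "pos_quad_form (p ^ r) (kron_sum_pow R r * (kron_pow Q r * P * transpose_mat (kron_pow Q r)))"
proof -
  define K where "K = kron_pow Q r"
  define S where "S = kron_sum_pow L r"
  have K: "K \<in> carrier_mat (p ^ r) (n ^ r)" unfolding K_def by (rule kron_pow_carrier[OF Q])
  have S: "S \<in> carrier_mat (n ^ r) (n ^ r)" unfolding S_def by (rule kron_sum_pow_carrier[OF L])
  have Rr: "kron_sum_pow R r \<in> carrier_mat (p ^ r) (p ^ r)" by (rule kron_sum_pow_carrier[OF R])
  have "K * S * P * transpose_mat K = kron_sum_pow R r * K * P * transpose_mat K"
    unfolding K_def S_def kron_pow_mult_kron_sum_pow[OF Q L R QL] ..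
  also have "\<dots> = kron_sum_pow R r * (K * P * transpose_mat K)"
    using Rr K P by (simp add: assoc_mult_mat[of _ "p ^ r" "p ^ r" _ "n ^ r"])
  finally have X: "K * S * P * transpose_mat K = kron_sum_pow R r * (K * P * transpose_mat K)" .
  have "K * P * transpose_mat S * transpose_mat K = transpose_mat (K * S * P * transpose_mat K)"
    using transpose_mult4[OF K S P, of "transpose_mat K" "p ^ r"] K P_sym by simp
  then have "neg_def (p ^ r) (- (K * S * P * transpose_mat K) - transpose_mat (K * S * P * transpose_mat K))"
    using lmi unfolding K_def S_def by simp
  then show ?thesis
    unfolding K_def[symmetric] X by (rule pos_quad_form_of_neg_def[rotated]) (use Rr K P in auto)
qed

lemma switched_solution_mult_mat:
  assumes sol: "switched_solution n Ls \<sigma> x" and Q: "Q \<in> carrier_mat p n"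
    and L: "\<And>t. t \<ge> 0 \<Longrightarrow> Ls ! \<sigma> t \<in> carrier_mat n n"
    and R: "\<And>t. t \<ge> 0 \<Longrightarrow> R t \<in> carrier_mat p p"
    and QL: "\<And>t. t \<ge> 0 \<Longrightarrow> Q * Ls ! \<sigma> t = R t * Q"
  obtains D where "\<forall>T. finite (D \<inter> {0..T})"
    and "\<And>k. k < p \<Longrightarrow> continuous_on {0..} (\<lambda>t. (Q *\<^sub>v x t) $ k)"
    and "\<And>t k. t \<ge> 0 \<Longrightarrow> t \<notin> D \<Longrightarrow> k < p \<Longrightarrow>
           ((\<lambda>s. (Q *\<^sub>v x s) $ k) has_real_derivative (- (R t *\<^sub>v (Q *\<^sub>v x t))) $ k) (at t within {0..})"
proof -
  have x: "\<And>t. t \<ge> 0 \<Longrightarrow> x t \<in> carrier_vec n"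
    and cont: "\<And>i. i < n \<Longrightarrow> continuous_on {0..} (\<lambda>t. x t $ i)"
    using sol unfolding switched_solution_def by auto
  obtain D where D: "\<forall>T. finite (D \<inter> {0..T})"
    and der: "\<And>t i. t \<ge> 0 \<Longrightarrow> t \<notin> D \<Longrightarrow> i < n \<Longrightarrow>
        ((\<lambda>s. x s $ i) has_real_derivative ((- (Ls ! \<sigma> t)) *\<^sub>v x t) $ i) (at t within {0..})"
    using sol unfolding switched_solution_def by blast
  have entry: "(Q *\<^sub>v v) $ k = (\<Sum>j<n. Q $$ (k,j) * v $ j)" if "k < p" "dim_vec v = n" for k v
    using Q that by (simp add: scalar_prod_def atLeast0LessThan row_def)
  show ?thesis
  proof (rule that[OF D])
    fix k assume k: "k < p"
    have "continuous_on {0..} (\<lambda>t. \<Sum>j<n. Q $$ (k,j) * x t $ j)" by (intro continuous_intros cont) auto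
    then show "continuous_on {0..} (\<lambda>t. (Q *\<^sub>v x t) $ k)"
      by (rule continuous_on_cong[THEN iffD1, rotated 2]) (use entry[OF k] x in auto)
  next
    fix t k assume t: "t \<ge> 0" "t \<notin> D" and k: "k < p"
    have Lt: "Ls ! \<sigma> t \<in> carrier_mat n n" using L t by simp
    have "((\<lambda>s. \<Sum>j<n. Q $$ (k,j) * x s $ j) has_real_derivative
          (\<Sum>j<n. Q $$ (k,j) * ((- (Ls ! \<sigma> t)) *\<^sub>v x t) $ j)) (at t within {0..})"
      by (intro DERIV_sum DERIV_cmult der t) auto
    moreover have "(\<Sum>j<n. Q $$ (k,j) * ((- (Ls ! \<sigma> t)) *\<^sub>v x t) $ j) = (- (R t *\<^sub>v (Q *\<^sub>v x t))) $ k"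
    proof -
      have "(\<Sum>j<n. Q $$ (k,j) * ((- (Ls ! \<sigma> t)) *\<^sub>v x t) $ j) = (Q *\<^sub>v (- (Ls ! \<sigma> t *\<^sub>v x t))) $ k"
        using entry[OF k] Lt x[OF t(1)] by simp
      also have "Q *\<^sub>v (- (Ls ! \<sigma> t *\<^sub>v x t)) = - ((Q * Ls ! \<sigma> t) *\<^sub>v x t)"
        using Q Lt x[OF t(1)] by (intro eq_vecI) (auto simp: scalar_prod_uminus_right)
      also have "(Q * Ls ! \<sigma> t) *\<^sub>v x t = R t *\<^sub>v (Q *\<^sub>v x t)"
        unfolding QL[OF t(1)] using Q R[OF t(1)] x[OF t(1)] by simp
      finally show ?thesis using k R[OF t(1)] by simp
    qed
    ultimately have "((\<lambda>s. \<Sum>j<n. Q $$ (k,j) * x s $ j) has_real_derivative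
        (- (R t *\<^sub>v (Q *\<^sub>v x t))) $ k) (at t within {0..})" by metis
    then show "((\<lambda>s. (Q *\<^sub>v x s) $ k) has_real_derivative (- (R t *\<^sub>v (Q *\<^sub>v x t))) $ k) (at t within {0..})"
      by (rule has_field_derivative_transform_within[where d = 1]) (use t k entry x in auto)
  qed
qed

lemma sum_switched_solution_const:
  assumes sol: "switched_solution n Ls \<sigma> x"
    and L: "\<And>t. t \<ge> 0 \<Longrightarrow> Ls ! \<sigma> t \<in> carrier_mat n n \<and> weight_balanced n (Ls ! \<sigma> t)"
    and t: "t \<ge> 0"
  shows "(\<Sum>j<n. x t $ j) = (\<Sum>j<n. x 0 $ j)"
proof -
  obtain D where D: "\<forall>T. finite (D \<inter> {0..T})"
    and der: "\<And>t i. t \<ge> 0 \<Longrightarrow> t \<notin> D \<Longrightarrow> i < n \<Longrightarrow>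
        ((\<lambda>s. x s $ i) has_real_derivative ((- (Ls ! \<sigma> t)) *\<^sub>v x t) $ i) (at t within {0..})"
    using sol unfolding switched_solution_def by blast
  show ?thesis
  proof (rule constant_of_deriv_zero_except[OF _ D _ t])
    show "continuous_on {0..} (\<lambda>t. \<Sum>j<n. x t $ j)"
      using sol unfolding switched_solution_def by (intro continuous_intros) auto
  next
    fix t :: real assume t: "t > 0" "t \<notin> D"
    have Lt: "Ls ! \<sigma> t \<in> carrier_mat n n" "weight_balanced n (Ls ! \<sigma> t)" using L t by auto
    have xt: "x t \<in> carrier_vec n" using sol t unfolding switched_solution_def by auto
    have "(\<Sum>j<n. ((- (Ls ! \<sigma> t)) *\<^sub>v x t) $ j) = - (\<Sum>j<n. \<Sum>l<n. Ls ! \<sigma> t $$ (j,l) * x t $ l)"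
      using Lt xt by (simp add: scalar_prod_def atLeast0LessThan row_def sum_negf)
    also have "\<dots> = - (\<Sum>l<n. (\<Sum>j<n. Ls ! \<sigma> t $$ (j,l)) * x t $ l)"
      by (subst sum.swap) (simp add: sum_distrib_right)
    also have "\<dots> = 0" using weight_balanced_col_sum[OF Lt(2) Lt(1)] by simp
    moreover have "((\<lambda>t. \<Sum>j<n. x t $ j) has_real_derivative (\<Sum>j<n. ((- (Ls ! \<sigma> t)) *\<^sub>v x t) $ j))
        (at t within {0..})"
      using t by (intro DERIV_sum der) auto
    ultimately show "((\<lambda>t. \<Sum>j<n. x t $ j) has_real_derivative 0) (at t within {0..})" by simp
  qed
qed

lemma tendsto_zero_of_vec_kron_pow:
  fixes u :: "real \<Rightarrow> real Matrix.vec"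
  assumes r: "r \<ge> 1" and u: "\<And>t. dim_vec (u t) = p"
    and lim: "\<And>i. i < p ^ r \<Longrightarrow> ((\<lambda>t. vec_kron_pow (u t) r $ i) \<longlongrightarrow> 0) F" and k: "k < p"
  shows "((\<lambda>t. u t $ k) \<longlongrightarrow> 0) F"
proof -
  define i where "i = kron_pow_diag_index p k r"
  have i: "i < p ^ r" and diag: "\<And>t. vec_kron_pow (u t) r $ i = (u t $ k) ^ r"
    using vec_kron_pow_diag[of k "u _" r] u k unfolding i_def by auto
  have "((\<lambda>t. root r \<bar>vec_kron_pow (u t) r $ i\<bar>) \<longlongrightarrow> root r \<bar>0\<bar>) F"
    by (intro tendsto_real_root tendsto_rabs lim i)
  moreover have "root r \<bar>vec_kron_pow (u t) r $ i\<bar> = \<bar>u t $ k\<bar>" for t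
    unfolding diag power_abs using r by (simp add: real_root_power_cancel)
  ultimately show ?thesis by (simp add: tendsto_rabs_zero_iff)
qed

lemma switched_laplacian_disagreement_tendsto_zero:
  fixes Q P :: "real mat"
  assumes lap: "\<forall>L \<in> set Ls. L \<in> carrier_mat n n \<and> is_signed_laplacian n L"
      and Q: "Q \<in> carrier_mat (n - 1) n" and QQ: "Q * transpose_mat Q = 1\<^sub>m (n - 1)"
      and Q1: "Q *\<^sub>v ones_vec n = 0\<^sub>v (n - 1)" and n: "n \<ge> 1" and r: "r \<ge> 1"
      and P: "pos_def (n ^ r) P"
      and lmi: "\<forall>L \<in> set Ls. neg_def ((n - 1) ^ r)
           (- (kron_pow Q r * kron_sum_pow L r * P * transpose_mat (kron_pow Q r))
            - kron_pow Q r * P * transpose_mat (kron_sum_pow L r) * transpose_mat (kron_pow Q r))"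
      and sw: "switching_signal (length Ls) \<sigma>" and sol: "switched_solution n Ls \<sigma> x"
      and k: "k < n - 1"
  shows "((\<lambda>t. (Q *\<^sub>v x t) $ k) \<longlongrightarrow> 0) at_top"
proof -
  define p where "p = n - 1"
  define R where "R L = Q * L * transpose_mat Q" for L
  define Pb where "Pb = kron_pow Q r * P * transpose_mat (kron_pow Q r)"
  have Qc: "Q \<in> carrier_mat p n" using Q unfolding p_def .
  have mode: "Ls ! \<sigma> t \<in> set Ls" if "t \<ge> 0" for t using sw that unfolding switching_signal_def by auto
  have R: "R L \<in> carrier_mat p p" if "L \<in> set Ls" for L
    using lap that Q unfolding R_def p_def by auto
  have QL: "Q * L = R L * Q" if "L \<in> set Ls" for L
    unfolding R_def using lap that by (intro mult_laplacian_eq_reduced_mult[OF Q QQ Q1 n]) auto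
  obtain D where D: "\<forall>T. finite (D \<inter> {0..T})"
    and cont: "\<And>k. k < p \<Longrightarrow> continuous_on {0..} (\<lambda>t. (Q *\<^sub>v x t) $ k)"
    and der: "\<And>t k. t \<ge> 0 \<Longrightarrow> t \<notin> D \<Longrightarrow> k < p \<Longrightarrow> ((\<lambda>s. (Q *\<^sub>v x s) $ k) has_real_derivative
                (- (R (Ls ! \<sigma> t) *\<^sub>v (Q *\<^sub>v x t))) $ k) (at t within {0..})"
    using switched_solution_mult_mat[OF sol Qc, of "\<lambda>t. R (Ls ! \<sigma> t)"] lap mode R QL by blast
  have u: "Q *\<^sub>v x t \<in> carrier_vec p" for t using Qc by (simp add: carrier_vecI)
  have "((\<lambda>t. vec_kron_pow (Q *\<^sub>v x t) r $ i) \<longlongrightarrow> 0) at_top" if "i < p ^ r" for i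
  proof (rule switched_linear_tendsto_zero[OF _ _ _ _ _ _ D _ that,
        where Ms = "(\<lambda>L. kron_sum_pow (R L) r) ` set Ls" and P = Pb and A = "\<lambda>t. kron_sum_pow (R (Ls ! \<sigma> t)) r"])
    show "pos_def (p ^ r) Pb"
      unfolding Pb_def using P kron_pow_carrier[OF Qc] kron_pow_mult_transpose[OF Qc QQ[folded p_def]]
      by (intro pos_def_congruence) auto
    fix M assume "M \<in> (\<lambda>L. kron_sum_pow (R L) r) ` set Ls"
    then obtain L where L: "L \<in> set Ls" and M: "M = kron_sum_pow (R L) r" by blast
    have "pos_quad_form (p ^ r) (kron_sum_pow (R L) r * Pb)"
      unfolding Pb_def using L lap lmi P
      by (intro pos_quad_form_of_kron_lmi[OF Qc _ R[OF L] QL[OF L]]) (auto simp: p_def pos_def_def symmetric_mat_def)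
    then show "M \<in> carrier_mat (p ^ r) (p ^ r) \<and> pos_quad_form (p ^ r) (M * Pb)"
      unfolding M using kron_sum_pow_carrier[OF R[OF L]] by simp
  next
    fix s :: real show "vec_kron_pow (Q *\<^sub>v x s) r \<in> carrier_vec (p ^ r)" by (rule vec_kron_pow_carrier[OF u])
  next
    fix i assume "i < p ^ r"
    then show "continuous_on {0..} (\<lambda>s. vec_kron_pow (Q *\<^sub>v x s) r $ i)"
      by (intro continuous_on_vec_kron_pow[where u = "\<lambda>s. Q *\<^sub>v x s", OF u] cont)
  next
    fix t i assume "t \<ge> 0" "t \<notin> D" "i < p ^ r"
    then show "((\<lambda>s. vec_kron_pow (Q *\<^sub>v x s) r $ i) has_real_derivative
        (- (kron_sum_pow (R (Ls ! \<sigma> t)) r *\<^sub>v vec_kron_pow (Q *\<^sub>v x t) r)) $ i) (at t within {0..})"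
      using mode by (intro has_derivative_vec_kron_pow[where u = "\<lambda>s. Q *\<^sub>v x s", OF R u der]) auto
  qed (use mode in auto)
  then show ?thesis
    using tendsto_zero_of_vec_kron_pow[OF r, of "\<lambda>t. Q *\<^sub>v x t" p] Qc k unfolding p_def by auto
qed

lemma tendsto_average_of_disagreement_tendsto_zero:
  fixes Q :: "real mat" and x :: "real \<Rightarrow> real Matrix.vec"
  assumes Q: "Q \<in> carrier_mat (n - 1) n" and QQ: "Q * transpose_mat Q = 1\<^sub>m (n - 1)"
      and Q1: "Q *\<^sub>v ones_vec n = 0\<^sub>v (n - 1)" and n: "n \<ge> 1"
      and x: "\<And>t. t \<ge> 0 \<Longrightarrow> x t \<in> carrier_vec n"
      and sum: "\<And>t. t \<ge> 0 \<Longrightarrow> (\<Sum>j<n. x t $ j) = s"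
      and lim: "\<And>k. k < n - 1 \<Longrightarrow> ((\<lambda>t. (Q *\<^sub>v x t) $ k) \<longlongrightarrow> 0) at_top"
      and i: "i < n"
  shows "((\<lambda>t. x t $ i) \<longlongrightarrow> s / real n) at_top"
proof -
  have x_eq: "x t $ i = (\<Sum>k<n-1. Q $$ (k,i) * (Q *\<^sub>v x t) $ k) + s / real n" if t: "t \<ge> 0" for t
  proof -
    have "(\<Sum>k<n-1. Q $$ (k,i) * (Q *\<^sub>v x t) $ k) = (\<Sum>k<n-1. \<Sum>j<n. Q $$ (k,i) * Q $$ (k,j) * x t $ j)"
      using Q x[OF t] by (simp add: scalar_prod_def atLeast0LessThan row_def sum_distrib_left mult.assoc)
    also have "\<dots> = (\<Sum>j<n. ((if i = j then 1 else 0) - 1 / real n) * x t $ j)"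
      using orthonormal_complement_of_ones[OF Q QQ Q1 n i]
      by (subst sum.swap) (simp add: sum_distrib_right[symmetric])
    also have "\<dots> = (\<Sum>j<n. (if i = j then x t $ j else 0) - x t $ j / real n)"
      by (intro sum.cong) (auto simp: algebra_simps)
    also have "\<dots> = x t $ i - s / real n"
      using i sum[OF t] by (simp add: sum_subtractf sum_divide_distrib[symmetric])
    finally show ?thesis by simp
  qed
  have "((\<lambda>t. (\<Sum>k<n-1. Q $$ (k,i) * (Q *\<^sub>v x t) $ k) + s / real n) \<longlongrightarrow>
                  (\<Sum>k<n-1. Q $$ (k,i) * 0) + s / real n) at_top"
    by (intro tendsto_intros lim) auto
  moreover have "\<forall>\<^sub>F t in at_top. (\<Sum>k<n-1. Q $$ (k,i) * (Q *\<^sub>v x t) $ k) + s / real n = x t $ i"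
    using eventually_ge_at_top[of 0] by eventually_elim (simp add: x_eq)
  ultimately show ?thesis by (simp add: tendsto_cong)
qed

theorem corollary6:
  fixes n r :: nat and Ls :: "real mat list" and Q P :: "real mat"
  assumes lap: "\<forall>L \<in> set Ls. L \<in> carrier_mat n n \<and> is_signed_laplacian n L"
      and bal: "\<forall>L \<in> set Ls. weight_balanced n L"
      and eep: "\<forall>L \<in> set Ls. EEP (- L)"
      and Qdim: "Q \<in> carrier_mat (n - 1) n"
      and QQt: "Q * transpose_mat Q = 1\<^sub>m (n - 1)"
      and Q1: "Q *\<^sub>v ones_vec n = 0\<^sub>v (n - 1)"
      and r: "r \<ge> 1"
      and P: "pos_def (n ^ r) P"
      and lmi: "\<forall>L \<in> set Ls.
         neg_def ((n - 1) ^ r)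
           (- (kron_pow Q r * kron_sum_pow L r * P * transpose_mat (kron_pow Q r))
            - kron_pow Q r * P * transpose_mat (kron_sum_pow L r) * transpose_mat (kron_pow Q r))"
  shows "consensus_set n Ls"
  unfolding consensus_set_def
proof (intro allI impI)
  fix \<sigma> :: "real \<Rightarrow> nat" and x :: "real \<Rightarrow> real Matrix.vec"
  assume sw: "switching_signal (length Ls) \<sigma>" and sol: "switched_solution n Ls \<sigma> x"
  show "\<exists>\<alpha>. \<forall>i<n. ((\<lambda>t. x t $ i) \<longlongrightarrow> \<alpha>) at_top"
  proof (cases "n = 0")
    case False
    then have n: "n \<ge> 1" by simp
    have mode: "\<And>t. t \<ge> 0 \<Longrightarrow> Ls ! \<sigma> t \<in> set Ls" using sw unfolding switching_signal_def by auto
    have "((\<lambda>t. x t $ i) \<longlongrightarrow> (\<Sum>j<n. x 0 $ j) / real n) at_top" if "i < n" for i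
    proof (rule tendsto_average_of_disagreement_tendsto_zero[OF Qdim QQt Q1 n _ _ _ that])
      show "\<And>t. t \<ge> 0 \<Longrightarrow> x t \<in> carrier_vec n" using sol unfolding switched_solution_def by auto
      show "\<And>t. t \<ge> 0 \<Longrightarrow> (\<Sum>j<n. x t $ j) = (\<Sum>j<n. x 0 $ j)"
        using sum_switched_solution_const[OF sol] mode lap bal by blast
      show "\<And>k. k < n - 1 \<Longrightarrow> ((\<lambda>t. (Q *\<^sub>v x t) $ k) \<longlongrightarrow> 0) at_top"
        by (rule switched_laplacian_disagreement_tendsto_zero[OF lap Qdim QQt Q1 n r P lmi sw sol])
    qed
    then show ?thesis by blast
  qed simp
qed

end
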